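(* Let $\gamma: I \to M$ be a unit speed curve on a smooth oriented surface $M\subset E^3$ with Darboux frame $\{T,V,U\}$, nowhere-vanishing normal curvature $k_n$, geodesic curvature $k_g$ and geodesic torsion $\tau_g$, and suppose the position vector of $\gamma$ always lies in the plane spanned by $\{T, V\}$, i.e. $\gamma(s) = \mu_1(s)T(s) + \mu_2(s)V(s)$ for differentiable functions $\mu_1,\mu_2$. Then $\gamma$ is an isophotic curve if and only if the function $$s\mapsto \frac{k_n^2}{(k_n^2+\tau_g^2)^{3/2}}\, e^{-\int \frac{\tau_g k_g}{k_n}\, ds}$$ is constant.
   Context: For a unit speed curve $\gamma$ on an oriented surface $M\subset E^3$, the Darboux frame is $T=\gamma'$, $U$ = unit normal of $M$ along $\gamma$, $V = U\times T$, satisfying $T' = k_g V + k_n U$, $V' = -k_g T + \tau_g U$, $U' = -k_n T - \tau_g V$; here $k_g$, $k_n$, $\tau_g$ are the geodesic curvature, normal curvature and geodesic torsion. The curve $\gamma$ is an isophotic curve if there is a fixed unit vector $d$ and a constant angle $\phi$ with $\langle U, d\rangle = \cos\phi$ along $\gamma$. $\int\cdot\,ds$ denotes an antiderivative. *)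

theory Defs
  imports "HOL-Analysis.Analysis" "HOL-Analysis.Cross3"
begin

definition isophotic :: "real set \<Rightarrow> (real \<Rightarrow> real^3) \<Rightarrow> bool" where
  "isophotic I U \<longleftrightarrow> (\<exists>(d::real^3) (\<phi>::real). norm d = 1 \<and> (\<forall>s\<in>I. U s \<bullet> d = cos \<phi>))"

end

theory Submission
  imports Defs
begin

text \<open>Differentiating \<open>\<langle>\<gamma>, U\<rangle> = 0\<close> gives \<open>kn \<mu>1 + \<tau>g \<mu>2 = 0\<close>; together with
  \<open>\<mu>2' = - kg \<mu>1\<close> this makes \<open>\<mu>2 exp (- F)\<close> a nonzero constant \<open>K\<close>. So the function in the
  theorem is \<open>K / w\<close> with \<open>w = \<mu>2 (kn\<^sup>2 + \<tau>g\<^sup>2) powr (3/2) / kn\<^sup>2\<close>, and it is constant iff \<open>w\<close> is.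
  If \<open>\<langle>U, d\<rangle> = cos \<phi>\<close>, differentiating \<open>\<langle>U, d\<rangle>\<close> and \<open>\<langle>d, T\<rangle> \<mu>2 - \<langle>d, V\<rangle> \<mu>1\<close> determines
  the tangential components of \<open>d\<close>, and \<open>|d| = 1\<close> becomes \<open>cos\<^sup>2 \<phi> (1 + w\<^sup>2) = 1\<close>.
  Conversely, for constant \<open>w\<close> the vector \<open>d = (\<alpha> / |\<gamma>|) \<gamma> + cos \<phi> U\<close> with \<open>tan \<phi> = |w|\<close> and
  \<open>\<alpha> = \<plusminus>sin \<phi>\<close> is constant; the sign of \<open>\<alpha>\<close> is that of \<open>kn\<close>, which cannot change on the
  interval.\<close>

lemma has_real_derivative_inner:
  fixes f g :: "real \<Rightarrow> 'a::real_inner"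
  assumes "(f has_vector_derivative f') (at s)" "(g has_vector_derivative g') (at s)"
  shows "((\<lambda>t. f t \<bullet> g t) has_real_derivative (f s \<bullet> g' + f' \<bullet> g s)) (at s)"
proof -
  have "((\<lambda>t. f t \<bullet> g t) has_derivative (\<lambda>h. f s \<bullet> (h *\<^sub>R g') + (h *\<^sub>R f') \<bullet> g s)) (at s)"
    using has_derivative_inner[OF assms[unfolded has_vector_derivative_def]] .
  then show ?thesis unfolding has_field_derivative_def
    by (rule has_derivative_eq_rhs) (auto simp: algebra_simps)
qed

lemma has_real_derivative_const_on_open_eq_0:
  assumes "(f has_real_derivative D) (at s)" "open S" "s \<in> S" "\<And>t. t \<in> S \<Longrightarrow> f t = c"
  shows "D = 0"
proof -
  have "((\<lambda>t. c) has_real_derivative D) (at s)"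
    by (rule has_field_derivative_transform_within_open[OF assms(1-3)]) (simp add: assms(4))
  then show ?thesis using DERIV_const DERIV_unique by blast
qed

lemma sgn_eq_if_continuous_on_interval_nonzero:
  fixes f :: "real \<Rightarrow> real"
  assumes "is_interval I" "continuous_on I f" "\<And>x. x \<in> I \<Longrightarrow> f x \<noteq> 0" "s \<in> I" "t \<in> I"
  shows "sgn (f s) = sgn (f t)"
proof (rule ccontr)
  assume "sgn (f s) \<noteq> sgn (f t)"
  then have "min (f s) (f t) \<le> 0" "0 \<le> max (f s) (f t)"
    using assms(3-5) by (auto simp: sgn_if split: if_splits)
  moreover have "is_interval (f ` I)"
    using assms(1,2) connected_continuous_image is_interval_connected is_interval_connected_1 by blast
  moreover have "min (f s) (f t) \<in> f ` I" "max (f s) (f t) \<in> f ` I"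
    using assms(4,5) by (simp_all add: min_def max_def)
  ultimately have "0 \<in> f ` I" by (metis mem_is_interval_1_I)
  then show False using assms(3) by auto
qed

lemma eq_if_power2_eq_sgn_eq:
  fixes x y :: real
  assumes "x\<^sup>2 = y\<^sup>2" "sgn x = sgn y"
  shows "x = y"
  using assms by (auto simp: power2_eq_iff sgn_if split: if_splits)

lemma powr_three_halves:
  fixes x :: real
  assumes "0 \<le> x"
  shows "x powr (3/2) = x * sqrt x"
  using powr_mult_base[OF assms, of "1/2"] assms by (simp add: powr_half_sqrt)

lemma norm_cross3_orthonormal:
  fixes T U :: "real^3"
  assumes "norm T = 1" "norm U = 1" "U \<bullet> T = 0"
  shows "norm (cross3 U T) = 1"
  using norm_cross_dot[of U T] assms norm_ge_zero[of "cross3 U T"] by (simp add: power2_eq_1_iff)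

lemma inner_cross3_orthonormal_sum_squares:
  fixes d T U :: "real^3"
  assumes "norm T = 1" "norm U = 1" "U \<bullet> T = 0"
  shows "(d \<bullet> T)\<^sup>2 + (d \<bullet> cross3 U T)\<^sup>2 + (d \<bullet> U)\<^sup>2 = d \<bullet> d"
proof -
  have TT: "T \<bullet> T = 1" and UU: "U \<bullet> U = 1" using assms by (simp_all add: norm_eq_1)
  have "(norm (cross3 d (cross3 U T)))\<^sup>2 + (d \<bullet> cross3 U T)\<^sup>2 = (norm d)\<^sup>2"
    using norm_cross_dot[of d "cross3 U T"] norm_cross3_orthonormal[OF assms] by simp
  moreover have "(norm (cross3 d (cross3 U T)))\<^sup>2 = (d \<bullet> T)\<^sup>2 + (d \<bullet> U)\<^sup>2"
    unfolding Lagrange power2_norm_eq_inner using assms(3) TT UU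
    by (simp add: inner_diff_left inner_diff_right inner_commute power2_eq_square)
  ultimately show ?thesis by (simp add: power2_norm_eq_inner)
qed

locale darboux_frame =
  fixes I :: "real set"
    and T V U :: "real \<Rightarrow> real^3"
    and kg kn \<tau>g :: "real \<Rightarrow> real"
  assumes open_I: "open I"
    and norm_T: "\<And>s. s \<in> I \<Longrightarrow> norm (T s) = 1"
    and norm_U: "\<And>s. s \<in> I \<Longrightarrow> norm (U s) = 1"
    and U_orth_T: "\<And>s. s \<in> I \<Longrightarrow> U s \<bullet> T s = 0"
    and V_eq: "\<And>s. s \<in> I \<Longrightarrow> V s = cross3 (U s) (T s)"
    and T_deriv: "\<And>s. s \<in> I \<Longrightarrow> (T has_vector_derivative (kg s *\<^sub>R V s + kn s *\<^sub>R U s)) (at s)"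
    and V_deriv: "\<And>s. s \<in> I \<Longrightarrow> (V has_vector_derivative (- kg s *\<^sub>R T s + \<tau>g s *\<^sub>R U s)) (at s)"
    and U_deriv: "\<And>s. s \<in> I \<Longrightarrow> (U has_vector_derivative (- kn s *\<^sub>R T s - \<tau>g s *\<^sub>R V s)) (at s)"
begin

lemma frame_inner:
  assumes "s \<in> I"
  shows "T s \<bullet> T s = 1" "V s \<bullet> V s = 1" "U s \<bullet> U s = 1"
    "T s \<bullet> V s = 0" "V s \<bullet> T s = 0" "T s \<bullet> U s = 0" "U s \<bullet> T s = 0" "U s \<bullet> V s = 0" "V s \<bullet> U s = 0"
proof -
  note orthonormal = norm_T[OF assms] norm_U[OF assms] U_orth_T[OF assms]
  have "norm (V s) = 1"
    using norm_cross3_orthonormal[OF orthonormal] V_eq[OF assms] by simp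
  then show "T s \<bullet> T s = 1" "V s \<bullet> V s = 1" "U s \<bullet> U s = 1"
    "T s \<bullet> V s = 0" "V s \<bullet> T s = 0" "T s \<bullet> U s = 0" "U s \<bullet> T s = 0" "U s \<bullet> V s = 0" "V s \<bullet> U s = 0"
    using orthonormal V_eq[OF assms] dot_cross_self[of "U s" "T s"]
    by (simp_all add: norm_eq_1 inner_commute)
qed

lemma inner_frame_sum_squares:
  assumes "s \<in> I"
  shows "(d \<bullet> T s)\<^sup>2 + (d \<bullet> V s)\<^sup>2 + (d \<bullet> U s)\<^sup>2 = d \<bullet> d"
  using inner_cross3_orthonormal_sum_squares[OF norm_T[OF assms] norm_U[OF assms] U_orth_T[OF assms]]
  by (simp add: V_eq[OF assms])

lemma has_real_derivative_inner_frame: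
  assumes "(x has_vector_derivative x') (at s)" "s \<in> I"
  shows "((\<lambda>t. x t \<bullet> T t) has_real_derivative
            kg s * (x s \<bullet> V s) + kn s * (x s \<bullet> U s) + x' \<bullet> T s) (at s)"
    and "((\<lambda>t. x t \<bullet> V t) has_real_derivative
            - kg s * (x s \<bullet> T s) + \<tau>g s * (x s \<bullet> U s) + x' \<bullet> V s) (at s)"
    and "((\<lambda>t. x t \<bullet> U t) has_real_derivative
            - kn s * (x s \<bullet> T s) - \<tau>g s * (x s \<bullet> V s) + x' \<bullet> U s) (at s)"
  using has_real_derivative_inner[OF assms(1) T_deriv[OF assms(2)]]
    has_real_derivative_inner[OF assms(1) V_deriv[OF assms(2)]]
    has_real_derivative_inner[OF assms(1) U_deriv[OF assms(2)]]
  by (simp_all add: inner_add_right inner_diff_right)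

end

locale darboux_curve = darboux_frame +
  fixes \<gamma> :: "real \<Rightarrow> real^3"
    and \<mu>1 \<mu>2 F :: "real \<Rightarrow> real"
  assumes interval_I: "is_interval I"
    and nonempty_I: "I \<noteq> {}"
    and kn_continuous: "continuous_on I kn"
    and kn_nonzero: "\<And>s. s \<in> I \<Longrightarrow> kn s \<noteq> 0"
    and \<gamma>_deriv: "\<And>s. s \<in> I \<Longrightarrow> (\<gamma> has_vector_derivative T s) (at s)"
    and position: "\<And>s. s \<in> I \<Longrightarrow> \<gamma> s = \<mu>1 s *\<^sub>R T s + \<mu>2 s *\<^sub>R V s"
    and F_deriv: "\<And>s. s \<in> I \<Longrightarrow> (F has_real_derivative \<tau>g s * kg s / kn s) (at s)"
begin

lemma inner_position:
  assumes "s \<in> I"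
  shows "\<gamma> s \<bullet> T s = \<mu>1 s" "\<gamma> s \<bullet> V s = \<mu>2 s" "\<gamma> s \<bullet> U s = 0"
  using frame_inner[OF assms] position[OF assms] by (simp_all add: inner_add_left)

lemma mu1_deriv:
  assumes "s \<in> I"
  shows "(\<mu>1 has_real_derivative kg s * \<mu>2 s + 1) (at s)"
proof -
  have "((\<lambda>t. \<gamma> t \<bullet> T t) has_real_derivative kg s * \<mu>2 s + 1) (at s)"
    using has_real_derivative_inner_frame(1)[OF \<gamma>_deriv[OF assms] assms]
    by (simp add: inner_position[OF assms] frame_inner[OF assms])
  then show ?thesis
    by (rule has_field_derivative_transform_within_open[OF _ open_I assms]) (simp add: inner_position)
qed

lemma mu2_deriv:
  assumes "s \<in> I"
  shows "(\<mu>2 has_real_derivative - kg s * \<mu>1 s) (at s)"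
proof -
  have "((\<lambda>t. \<gamma> t \<bullet> V t) has_real_derivative - kg s * \<mu>1 s) (at s)"
    using has_real_derivative_inner_frame(2)[OF \<gamma>_deriv[OF assms] assms]
    by (simp add: inner_position[OF assms] frame_inner[OF assms])
  then show ?thesis
    by (rule has_field_derivative_transform_within_open[OF _ open_I assms]) (simp add: inner_position)
qed

lemma kn_mu1_add_tau_mu2:
  assumes "s \<in> I"
  shows "kn s * \<mu>1 s + \<tau>g s * \<mu>2 s = 0"
proof -
  have "((\<lambda>t. \<gamma> t \<bullet> U t) has_real_derivative - (kn s * \<mu>1 s + \<tau>g s * \<mu>2 s)) (at s)"
    using has_real_derivative_inner_frame(3)[OF \<gamma>_deriv[OF assms] assms]
    by (simp add: inner_position[OF assms] frame_inner[OF assms])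
  from has_real_derivative_const_on_open_eq_0[OF this open_I assms inner_position(3)] show ?thesis
    by simp
qed

lemma mu1_eq:
  assumes "s \<in> I"
  shows "\<mu>1 s = - \<tau>g s * \<mu>2 s / kn s"
  using kn_mu1_add_tau_mu2[OF assms] kn_nonzero[OF assms] by (simp add: field_simps)

lemma mu2_exp_neg_F_const:
  obtains K where "K \<noteq> 0" "\<And>s. s \<in> I \<Longrightarrow> \<mu>2 s * exp (- F s) = K"
proof -
  have "\<exists>K. \<forall>s\<in>I. \<mu>2 s * exp (- F s) = K"
  proof (rule has_field_derivative_zero_constant[OF is_interval_convex[OF interval_I]])
    fix s assume s: "s \<in> I"
    have "((\<lambda>t. \<mu>2 t * exp (- F t)) has_real_derivative
        - kg s * exp (- F s) * (kn s * \<mu>1 s + \<tau>g s * \<mu>2 s) / kn s) (at s)"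
      using DERIV_mult[OF mu2_deriv[OF s] DERIV_chain2[OF DERIV_exp DERIV_minus[OF F_deriv[OF s]]]]
      by (rule DERIV_cong) (use kn_nonzero[OF s] in \<open>simp add: field_simps\<close>)
    then show "((\<lambda>t. \<mu>2 t * exp (- F t)) has_real_derivative 0) (at s within I)"
      by (simp add: kn_mu1_add_tau_mu2[OF s] has_field_derivative_at_within)
  qed
  then obtain K where K: "\<And>s. s \<in> I \<Longrightarrow> \<mu>2 s * exp (- F s) = K" by blast
  moreover have "K \<noteq> 0"
  proof
    assume "K = 0"
    then have "\<gamma> s = 0" if "s \<in> I" for s
      using K[OF that] position[OF that] mu1_eq[OF that] by simp
    moreover obtain s0 where s0: "s0 \<in> I" using nonempty_I by blast
    ultimately have "((\<lambda>t. 0) has_vector_derivative T s0) (at s0)"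
      using has_vector_derivative_transform_within_open[OF \<gamma>_deriv[OF s0] open_I s0] by simp
    then have "T s0 = 0" using vector_derivative_unique_at has_vector_derivative_const by metis
    then show False using norm_T[OF s0] by simp
  qed
  ultimately show ?thesis using that by blast
qed

lemma kn_sq_add_tau_sq_pos:
  assumes "s \<in> I"
  shows "0 < (kn s)\<^sup>2 + (\<tau>g s)\<^sup>2"
  using kn_nonzero[OF assms] by (simp add: add_pos_nonneg)

lemma mu2_nonzero:
  assumes "s \<in> I"
  shows "\<mu>2 s \<noteq> 0"
  using assms by (metis mu2_exp_neg_F_const mult_zero_left)

lemma norm_position_sq:
  assumes "s \<in> I"
  shows "(norm (\<gamma> s))\<^sup>2 = (\<mu>1 s)\<^sup>2 + (\<mu>2 s)\<^sup>2"
proof -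
  have "(norm (\<gamma> s))\<^sup>2 = \<gamma> s \<bullet> \<gamma> s"
    by (rule power2_norm_eq_inner)
  also have "\<dots> = (\<mu>1 s)\<^sup>2 + (\<mu>2 s)\<^sup>2"
    using frame_inner[OF assms] position[OF assms]
    by (simp add: inner_add_left inner_add_right power2_eq_square)
  finally show ?thesis .
qed

lemma norm_position:
  assumes "s \<in> I"
  shows "norm (\<gamma> s) = \<bar>\<mu>2 s\<bar> * sqrt ((kn s)\<^sup>2 + (\<tau>g s)\<^sup>2) / \<bar>kn s\<bar>"
proof -
  have "(norm (\<gamma> s))\<^sup>2 = (\<mu>2 s)\<^sup>2 * ((kn s)\<^sup>2 + (\<tau>g s)\<^sup>2) / (kn s)\<^sup>2"
    using norm_position_sq[OF assms] kn_nonzero[OF assms]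
    by (simp add: mu1_eq[OF assms] field_simps power2_eq_square)
  then have "norm (\<gamma> s) = sqrt ((\<mu>2 s)\<^sup>2 * ((kn s)\<^sup>2 + (\<tau>g s)\<^sup>2) / (kn s)\<^sup>2)"
    by (metis norm_ge_zero real_sqrt_unique)
  then show ?thesis by (simp add: real_sqrt_mult real_sqrt_divide)
qed

lemma norm_position_pos:
  assumes "s \<in> I"
  shows "0 < norm (\<gamma> s)"
  using norm_position[OF assms] mu2_nonzero[OF assms] kn_nonzero[OF assms] kn_sq_add_tau_sq_pos[OF assms]
  by simp

lemma norm_position_deriv:
  assumes "s \<in> I"
  shows "((\<lambda>t. norm (\<gamma> t)) has_real_derivative \<mu>1 s / norm (\<gamma> s)) (at s)"
proof -
  have "((\<lambda>t. sqrt (\<gamma> t \<bullet> \<gamma> t)) has_real_derivative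
      inverse (sqrt (\<gamma> s \<bullet> \<gamma> s)) / 2 * (\<gamma> s \<bullet> T s + T s \<bullet> \<gamma> s)) (at s)"
    using norm_position_pos[OF assms]
    by (intro DERIV_chain2[OF DERIV_real_sqrt has_real_derivative_inner[OF \<gamma>_deriv[OF assms] \<gamma>_deriv[OF assms]]])
      simp
  then show ?thesis
    using inner_position(1)[OF assms] norm_position_pos[OF assms]
    by (simp add: norm_eq_sqrt_inner[symmetric] inner_commute field_simps)
qed

text \<open>For an isophote of angle \<open>\<phi>\<close> this is \<open>\<plusminus>tan \<phi>\<close>, see \<open>isophotic_slope_sq\<close>.\<close>
definition slope :: "real \<Rightarrow> real" where
  "slope s = \<mu>2 s * ((kn s)\<^sup>2 + (\<tau>g s)\<^sup>2) powr (3/2) / (kn s)\<^sup>2"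

lemma slope_eq:
  assumes "s \<in> I"
  shows "slope s = \<mu>2 s * ((kn s)\<^sup>2 + (\<tau>g s)\<^sup>2) * sqrt ((kn s)\<^sup>2 + (\<tau>g s)\<^sup>2) / (kn s)\<^sup>2"
  using kn_sq_add_tau_sq_pos[OF assms] by (simp add: slope_def powr_three_halves)

lemma slope_sq:
  assumes "s \<in> I"
  shows "(slope s)\<^sup>2 = (\<mu>2 s)\<^sup>2 * ((kn s)\<^sup>2 + (\<tau>g s)\<^sup>2) ^ 3 / (kn s) ^ 4"
proof -
  define R where "R = (kn s)\<^sup>2 + (\<tau>g s)\<^sup>2"
  have "slope s = \<mu>2 s * (R * sqrt R) / (kn s)\<^sup>2"
    by (simp add: slope_eq[OF assms] R_def)
  then have "(slope s)\<^sup>2 = (\<mu>2 s)\<^sup>2 * (R\<^sup>2 * (sqrt R)\<^sup>2) / ((kn s)\<^sup>2)\<^sup>2"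
    by (simp add: power_divide power_mult_distrib)
  also have "\<dots> = (\<mu>2 s)\<^sup>2 * R ^ 3 / (kn s) ^ 4"
    using kn_sq_add_tau_sq_pos[OF assms] by (simp add: R_def eval_nat_numeral)
  finally show ?thesis by (simp add: R_def)
qed

lemma const_normal_inner_orth:
  assumes "\<And>t. t \<in> I \<Longrightarrow> d \<bullet> U t = c" "s \<in> I"
  shows "kn s * (d \<bullet> T s) + \<tau>g s * (d \<bullet> V s) = 0"
proof -
  have "((\<lambda>t. d \<bullet> U t) has_real_derivative - (kn s * (d \<bullet> T s) + \<tau>g s * (d \<bullet> V s))) (at s)"
    using has_real_derivative_inner_frame(3)[OF has_vector_derivative_const assms(2)] by simp
  from has_real_derivative_const_on_open_eq_0[OF this open_I assms(2) assms(1)] show ?thesis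
    by simp
qed

lemma const_normal_inner_V:
  assumes "\<And>t. t \<in> I \<Longrightarrow> d \<bullet> U t = c" "s \<in> I"
  shows "d \<bullet> V s = c * (kn s * \<mu>2 s - \<tau>g s * \<mu>1 s)"
proof -
  txt \<open>Both \<open>(\<langle>d, T\<rangle>, \<langle>d, V\<rangle>)\<close> and \<open>(\<mu>1, \<mu>2)\<close> are orthogonal to \<open>(kn, \<tau>g) \<noteq> 0\<close>.\<close>
  have parallel: "(d \<bullet> T t) * \<mu>2 t - (d \<bullet> V t) * \<mu>1 t = 0" if t: "t \<in> I" for t
  proof -
    have "kn t * ((d \<bullet> T t) * \<mu>2 t - (d \<bullet> V t) * \<mu>1 t)
        = (kn t * (d \<bullet> T t) + \<tau>g t * (d \<bullet> V t)) * \<mu>2 t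
          - (d \<bullet> V t) * (kn t * \<mu>1 t + \<tau>g t * \<mu>2 t)"
      by (simp add: algebra_simps)
    also have "\<dots> = 0"
      using const_normal_inner_orth[OF assms(1) t] kn_mu1_add_tau_mu2[OF t] by simp
    finally show ?thesis using kn_nonzero[OF t] by simp
  qed
  have dT: "((\<lambda>t. d \<bullet> T t) has_real_derivative kg s * (d \<bullet> V s) + kn s * c) (at s)"
    and dV: "((\<lambda>t. d \<bullet> V t) has_real_derivative - kg s * (d \<bullet> T s) + \<tau>g s * c) (at s)"
    using has_real_derivative_inner_frame(1,2)[OF has_vector_derivative_const assms(2), of d]
    by (simp_all add: assms)
  have "((\<lambda>t. (d \<bullet> T t) * \<mu>2 t - (d \<bullet> V t) * \<mu>1 t) has_real_derivative
      c * (kn s * \<mu>2 s - \<tau>g s * \<mu>1 s) - d \<bullet> V s) (at s)"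
    using DERIV_diff[OF DERIV_mult[OF dT mu2_deriv[OF assms(2)]] DERIV_mult[OF dV mu1_deriv[OF assms(2)]]]
    by (rule DERIV_cong) (simp add: algebra_simps)
  from has_real_derivative_const_on_open_eq_0[OF this open_I assms(2) parallel] show ?thesis
    by simp
qed

lemma isophotic_slope_sq:
  assumes "norm d = 1" "\<And>t. t \<in> I \<Longrightarrow> d \<bullet> U t = c" "s \<in> I"
  shows "c\<^sup>2 * (1 + (slope s)\<^sup>2) = 1"
proof -
  define R where "R = (kn s)\<^sup>2 + (\<tau>g s)\<^sup>2"
  have kn: "kn s \<noteq> 0" by (rule kn_nonzero[OF assms(3)])
  have b: "d \<bullet> V s = c * \<mu>2 s * R / kn s"
    using const_normal_inner_V[OF assms(2,3)] kn
    by (simp add: mu1_eq[OF assms(3)] R_def field_simps power2_eq_square)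
  have a: "d \<bullet> T s = - \<tau>g s * (d \<bullet> V s) / kn s"
    using const_normal_inner_orth[OF assms(2,3)] kn by (simp add: field_simps)
  have "(d \<bullet> T s)\<^sup>2 + (d \<bullet> V s)\<^sup>2 = c\<^sup>2 * (slope s)\<^sup>2"
    unfolding slope_sq[OF assms(3)] R_def[symmetric] a b using kn
    by (simp add: R_def field_simps eval_nat_numeral)
  moreover have "(d \<bullet> T s)\<^sup>2 + (d \<bullet> V s)\<^sup>2 + c\<^sup>2 = 1"
    using inner_frame_sum_squares[OF assms(3), of d] assms by (simp add: norm_eq_1)
  ultimately show ?thesis by (simp add: algebra_simps)
qed

lemma kn_norm_position_cube:
  assumes "s \<in> I"
  shows "kn s * (norm (\<gamma> s)) ^ 3 = sgn (kn s) * \<bar>slope s\<bar> * (\<mu>2 s)\<^sup>2"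
proof -
  define r where "r = sqrt ((kn s)\<^sup>2 + (\<tau>g s)\<^sup>2)"
  have r: "0 < r" using kn_sq_add_tau_sq_pos[OF assms] by (simp add: r_def)
  have R: "(kn s)\<^sup>2 + (\<tau>g s)\<^sup>2 = r\<^sup>2" using kn_sq_add_tau_sq_pos[OF assms] by (simp add: r_def)
  have kn: "kn s \<noteq> 0" by (rule kn_nonzero[OF assms])
  have slope_abs: "\<bar>slope s\<bar> = \<bar>\<mu>2 s\<bar> * r ^ 3 / (kn s)\<^sup>2"
    unfolding slope_eq[OF assms] R using r kn by (simp add: abs_mult power3_eq_cube power2_eq_square)
  have norm_eq: "norm (\<gamma> s) = \<bar>\<mu>2 s\<bar> * r / \<bar>kn s\<bar>"
    by (simp add: norm_position[OF assms] r_def)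
  have "kn s = sgn (kn s) * \<bar>kn s\<bar>" by (simp add: sgn_mult_abs)
  then show ?thesis unfolding slope_abs norm_eq using r kn
    by (simp add: power_divide power_mult_distrib field_simps power2_eq_square power3_eq_cube
        abs_mult_self_eq)
qed

lemma has_vector_derivative_const_direction:
  assumes "s \<in> I" "\<alpha> * (\<mu>2 s)\<^sup>2 = c * (kn s * (norm (\<gamma> s)) ^ 3)"
  shows "((\<lambda>t. (\<alpha> / norm (\<gamma> t)) *\<^sub>R \<gamma> t + c *\<^sub>R U t) has_vector_derivative 0) (at s)"
proof -
  define n where "n = norm (\<gamma> s)"
  have n: "n \<noteq> 0" using norm_position_pos[OF assms(1)] by (simp add: n_def)
  have n2: "n\<^sup>2 = (\<mu>1 s)\<^sup>2 + (\<mu>2 s)\<^sup>2" using norm_position_sq[OF assms(1)] by (simp add: n_def)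
  have "((\<lambda>t. \<alpha> / norm (\<gamma> t)) has_real_derivative - \<alpha> * \<mu>1 s / n ^ 3) (at s)"
    using DERIV_divide[OF DERIV_const norm_position_deriv[OF assms(1)] n[unfolded n_def]]
    by (rule DERIV_cong) (simp add: n_def power3_eq_cube)
  note derivative = has_vector_derivative_add[OF has_vector_derivative_scaleR[OF this \<gamma>_deriv[OF assms(1)]]
      has_vector_derivative_scaleR[OF DERIV_const[of c] U_deriv[OF assms(1)]]]
  have T_coeff: "\<alpha> / n - \<alpha> * \<mu>1 s * \<mu>1 s / n ^ 3 - c * kn s = 0"
  proof -
    have "(\<alpha> / n - \<alpha> * \<mu>1 s * \<mu>1 s / n ^ 3 - c * kn s) * n ^ 3
        = \<alpha> * (n\<^sup>2 - (\<mu>1 s)\<^sup>2) - c * (kn s * n ^ 3)"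
      using n by (simp add: field_simps power2_eq_square power3_eq_cube)
    also have "\<dots> = 0" using assms(2) n2 by (simp add: n_def)
    finally show ?thesis using n by simp
  qed
  have V_coeff: "- \<alpha> * \<mu>1 s * \<mu>2 s / n ^ 3 - c * \<tau>g s = 0"
  proof -
    have "(- \<alpha> * \<mu>1 s * \<mu>2 s / n ^ 3 - c * \<tau>g s) * n ^ 3 * kn s
        = - \<alpha> * \<mu>2 s * (kn s * \<mu>1 s) - \<tau>g s * (c * (kn s * n ^ 3))"
      using n by (simp add: field_simps)
    also have "\<dots> = - \<alpha> * \<mu>2 s * (kn s * \<mu>1 s + \<tau>g s * \<mu>2 s)"
      using assms(2) by (simp add: n_def algebra_simps power2_eq_square)
    also have "\<dots> = 0" using kn_mu1_add_tau_mu2[OF assms(1)] by simp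
    finally show ?thesis using n kn_nonzero[OF assms(1)] by simp
  qed
  have "(\<alpha> / norm (\<gamma> s)) *\<^sub>R T s + (- \<alpha> * \<mu>1 s / n ^ 3) *\<^sub>R \<gamma> s
      + (c *\<^sub>R (- kn s *\<^sub>R T s - \<tau>g s *\<^sub>R V s) + 0 *\<^sub>R U s)
      = (\<alpha> / n - \<alpha> * \<mu>1 s * \<mu>1 s / n ^ 3 - c * kn s) *\<^sub>R T s
        + (- \<alpha> * \<mu>1 s * \<mu>2 s / n ^ 3 - c * \<tau>g s) *\<^sub>R V s"
    unfolding n_def[symmetric] by (simp add: position[OF assms(1)] algebra_simps)
  also have "\<dots> = 0" by (simp only: T_coeff V_coeff scaleR_zero_left add_0_left)
  finally show ?thesis using derivative by simp
qed

lemma sgn_slope: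
  assumes "s \<in> I"
  shows "sgn (slope s) = sgn (\<mu>2 s)"
proof -
  have pos: "0 < ((kn s)\<^sup>2 + (\<tau>g s)\<^sup>2) powr (3/2) / (kn s)\<^sup>2"
    using kn_sq_add_tau_sq_pos[OF assms] kn_nonzero[OF assms] by simp
  have "slope s = \<mu>2 s * (((kn s)\<^sup>2 + (\<tau>g s)\<^sup>2) powr (3/2) / (kn s)\<^sup>2)"
    by (simp add: slope_def)
  then show ?thesis by (simp only: sgn_mult sgn_pos[OF pos] mult_1_right)
qed

lemma slope_const_imp_isophotic:
  assumes "\<And>s. s \<in> I \<Longrightarrow> slope s = w"
  shows "isophotic I U"
proof -
  obtain s0 where s0: "s0 \<in> I" using nonempty_I by blast
  have w: "0 < 1 + w\<^sup>2" by (rule add_pos_nonneg) simp_all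
  define c where "c = 1 / sqrt (1 + w\<^sup>2)"
  define \<alpha> where "\<alpha> = c * sgn (kn s0) * \<bar>w\<bar>"
  define d where "d t = (\<alpha> / norm (\<gamma> t)) *\<^sub>R \<gamma> t + c *\<^sub>R U t" for t
  have "(d has_vector_derivative 0) (at s within I)" if s: "s \<in> I" for s
  proof -
    have "sgn (kn s) = sgn (kn s0)"
      by (rule sgn_eq_if_continuous_on_interval_nonzero[OF interval_I kn_continuous kn_nonzero s s0])
    then have "\<alpha> * (\<mu>2 s)\<^sup>2 = c * (kn s * (norm (\<gamma> s)) ^ 3)"
      by (simp add: kn_norm_position_cube[OF s] assms[OF s] \<alpha>_def)
    from has_vector_derivative_const_direction[OF s this] show ?thesis
      unfolding d_def by (rule has_vector_derivative_at_within)
  qed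
  then obtain d0 where d0: "\<And>t. t \<in> I \<Longrightarrow> d t = d0"
    using has_vector_derivative_zero_constant[OF is_interval_convex[OF interval_I]] by metis
  have "U t \<bullet> d0 = c" if t: "t \<in> I" for t
    using d0[OF t, symmetric] frame_inner[OF t] inner_position[OF t]
    by (simp add: d_def inner_add_right inner_commute)
  moreover have "norm d0 = 1"
  proof -
    have "d0 \<bullet> d0 = \<alpha>\<^sup>2 * ((\<gamma> s0 \<bullet> \<gamma> s0) / (norm (\<gamma> s0))\<^sup>2) + c\<^sup>2"
      using d0[OF s0, symmetric] frame_inner[OF s0] inner_position[OF s0]
      by (simp add: d_def inner_add_left inner_add_right inner_commute power2_eq_square)
    also have "\<dots> = c\<^sup>2 * (1 + w\<^sup>2)"
      using norm_position_pos[OF s0] kn_nonzero[OF s0]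
      by (simp add: power2_norm_eq_inner[symmetric] \<alpha>_def power_mult_distrib algebra_simps sgn_if)
    also have "\<dots> = 1" using w by (simp add: c_def power_divide)
    finally show ?thesis by (simp add: norm_eq_1)
  qed
  moreover have "cos (arccos c) = c"
  proof (rule cos_arccos)
    have "1 \<le> sqrt (1 + w\<^sup>2)" by simp
    then show "c \<le> 1" using w by (simp add: c_def divide_le_eq_1)
    show "- 1 \<le> c" using w by (simp add: c_def order.trans[of _ 0])
  qed
  ultimately show ?thesis unfolding isophotic_def by metis
qed

lemma isophotic_iff_slope_const: "isophotic I U \<longleftrightarrow> (\<exists>w. \<forall>s\<in>I. slope s = w)"
proof
  assume "isophotic I U"
  then obtain d \<phi> where "norm d = 1" "\<And>s. s \<in> I \<Longrightarrow> U s \<bullet> d = cos \<phi>"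
    unfolding isophotic_def by blast
  then have sq: "(cos \<phi>)\<^sup>2 * (1 + (slope s)\<^sup>2) = 1" if "s \<in> I" for s
    using isophotic_slope_sq[OF _ _ that, of d] by (simp add: inner_commute)
  obtain s0 where s0: "s0 \<in> I" using nonempty_I by blast
  obtain K where "\<And>s. s \<in> I \<Longrightarrow> \<mu>2 s * exp (- F s) = K"
    using mu2_exp_neg_F_const by blast
  then have sgn_mu2: "sgn (\<mu>2 s) = sgn K" if "s \<in> I" for s
    using that by (metis sgn_mult sgn_pos exp_gt_zero mult.right_neutral)
  have "slope s = slope s0" if s: "s \<in> I" for s
  proof (rule eq_if_power2_eq_sgn_eq)
    show "(slope s)\<^sup>2 = (slope s0)\<^sup>2"
      using sq[OF s] sq[OF s0] by (metis mult_left_cancel add_left_cancel zero_neq_one mult_zero_left)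
    show "sgn (slope s) = sgn (slope s0)"
      using sgn_slope[OF s] sgn_slope[OF s0] sgn_mu2[OF s] sgn_mu2[OF s0] by simp
  qed
  then show "\<exists>w. \<forall>s\<in>I. slope s = w" by blast
next
  assume "\<exists>w. \<forall>s\<in>I. slope s = w"
  then show "isophotic I U" using slope_const_imp_isophotic by blast
qed

end

theorem theorem4p2:
  fixes I :: "real set"
    and \<gamma> T V U :: "real \<Rightarrow> real^3"
    and kg kn \<tau>g \<mu>1 \<mu>2 F :: "real \<Rightarrow> real"
  assumes I: "open I" "is_interval I" "I \<noteq> {}"
    and unit_speed: "\<And>s. s \<in> I \<Longrightarrow> (\<gamma> has_vector_derivative T s) (at s)"
                    "\<And>s. s \<in> I \<Longrightarrow> norm (T s) = 1"
    and normal: "\<And>s. s \<in> I \<Longrightarrow> norm (U s) = 1" "\<And>s. s \<in> I \<Longrightarrow> U s \<bullet> T s = 0"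
    and Vdef: "\<And>s. s \<in> I \<Longrightarrow> V s = cross3 (U s) (T s)"
    and dT: "\<And>s. s \<in> I \<Longrightarrow> (T has_vector_derivative (kg s *\<^sub>R V s + kn s *\<^sub>R U s)) (at s)"
    and dV: "\<And>s. s \<in> I \<Longrightarrow> (V has_vector_derivative (- kg s *\<^sub>R T s + \<tau>g s *\<^sub>R U s)) (at s)"
    and dU: "\<And>s. s \<in> I \<Longrightarrow> (U has_vector_derivative (- kn s *\<^sub>R T s - \<tau>g s *\<^sub>R V s)) (at s)"
    and curv_diff: "kg differentiable_on I" "kn differentiable_on I" "\<tau>g differentiable_on I"
    and kn_nz: "\<And>s. s \<in> I \<Longrightarrow> kn s \<noteq> 0"
    and mu_diff: "\<mu>1 differentiable_on I" "\<mu>2 differentiable_on I"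
    and position: "\<And>s. s \<in> I \<Longrightarrow> \<gamma> s = \<mu>1 s *\<^sub>R T s + \<mu>2 s *\<^sub>R V s"
    and F: "\<And>s. s \<in> I \<Longrightarrow> (F has_real_derivative (\<tau>g s * kg s / kn s)) (at s)"
  shows "isophotic I U \<longleftrightarrow>
    (\<exists>c. \<forall>s\<in>I. (kn s)\<^sup>2 / ((kn s)\<^sup>2 + (\<tau>g s)\<^sup>2) powr (3/2) * exp (- F s) = c)"
proof -
  interpret darboux_curve I T V U kg kn \<tau>g \<gamma> \<mu>1 \<mu>2 F
    using I unit_speed normal Vdef dT dV dU kn_nz position F
      differentiable_imp_continuous_on[OF curv_diff(2)]
    by unfold_locales auto
  obtain K where K: "K \<noteq> 0" "\<And>s. s \<in> I \<Longrightarrow> \<mu>2 s * exp (- F s) = K"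
    using mu2_exp_neg_F_const by blast
  have slope_nonzero: "slope s \<noteq> 0" if "s \<in> I" for s
    using sgn_slope[OF that] mu2_nonzero[OF that] by (metis sgn_0_0 sgn_0)
  have factor_eq: "(kn s)\<^sup>2 / ((kn s)\<^sup>2 + (\<tau>g s)\<^sup>2) powr (3/2) * exp (- F s) = K / slope s"
    if s: "s \<in> I" for s
    using K(2)[OF s] slope_nonzero[OF s] kn_nz[OF s] kn_sq_add_tau_sq_pos[OF s]
    by (simp add: slope_def field_simps)
  have "(\<exists>c. \<forall>s\<in>I. K / slope s = c) \<longleftrightarrow> (\<exists>w. \<forall>s\<in>I. slope s = w)"
    using K(1) slope_nonzero by (metis divide_cancel_left)
  then show ?thesis
    by (simp only: factor_eq isophotic_iff_slope_const cong: ball_cong)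
qed

end
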